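(* For all integers $1\le t\le n$, the $t$-path ideal $I=I_t(L_n)$ is normal, i.e. $\overline{I^s}=I^s$ for all $s\ge 1$ (where $\overline{J}$ denotes the integral closure of $J$).
   Context: $K$ is a field, $S=K[x_1,\ldots,x_n]$, and $I_t(L_n)=(u_1,\ldots,u_{n-t+1})$ with $u_i=x_ix_{i+1}\cdots x_{i+t-1}$ (the $t$-path ideal of the line graph $L_n$ with edges $\{x_j,x_{j+1}\}$). *)

theory Defs
  imports Main "HOL-Library.Poly_Mapping"
begin

text \<open>Multivariate polynomials over a coefficient ring: finitely supported maps from
monomials (exponent vectors, nat \<Rightarrow>0 nat) to coefficients; multiplication is convolution.\<close>
type_synonym 'a mpoly = "(nat \<Rightarrow>\<^sub>0 nat) \<Rightarrow>\<^sub>0 'a"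

definition Var :: "nat \<Rightarrow> 'a::comm_ring_1 mpoly" where
  "Var i = Poly_Mapping.single (Poly_Mapping.single i 1) 1"

definition polyring :: "nat \<Rightarrow> 'a::comm_ring_1 mpoly set" where
  "polyring n = {p :: 'a mpoly. \<forall>m \<in> Poly_Mapping.keys p. Poly_Mapping.keys m \<subseteq> {1..n}}"

definition ideal_gen :: "'a::comm_ring_1 mpoly set \<Rightarrow> 'a mpoly set \<Rightarrow> 'a mpoly set" where
  "ideal_gen R G = {(\<Sum>i<k. r i * g i) | (k::nat) r g. \<forall>i<k. r i \<in> R \<and> g i \<in> G}"

definition ideal_prod :: "'a::comm_ring_1 mpoly set \<Rightarrow> 'a mpoly set \<Rightarrow> 'a mpoly set \<Rightarrow> 'a mpoly set" where
  "ideal_prod R I J = ideal_gen R {a * b | a b. a \<in> I \<and> b \<in> J}"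

fun ideal_pow :: "'a::comm_ring_1 mpoly set \<Rightarrow> 'a mpoly set \<Rightarrow> nat \<Rightarrow> 'a mpoly set" where
  "ideal_pow R I 0 = R"
| "ideal_pow R I (Suc s) = ideal_prod R (ideal_pow R I s) I"

definition int_closure :: "'a::comm_ring_1 mpoly set \<Rightarrow> 'a mpoly set \<Rightarrow> 'a mpoly set" where
  "int_closure R J = {f \<in> R. \<exists>m\<ge>1. \<exists>a. (\<forall>i\<in>{1..m}. a i \<in> ideal_pow R J i) \<and>
       f ^ m + (\<Sum>i=1..m. a i * f ^ (m - i)) = 0}"

definition path_gens :: "nat \<Rightarrow> nat \<Rightarrow> 'a::comm_ring_1 mpoly set" where
  "path_gens n t = {(\<Prod>j\<in>{i..i+t-1}. Var j) | i. 1 \<le> i \<and> i \<le> n - t + 1}"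

definition path_ideal :: "nat \<Rightarrow> nat \<Rightarrow> 'a::comm_ring_1 mpoly set" where
  "path_ideal n t = ideal_gen (polyring n) (path_gens n t)"

end

theory Submission
  imports Defs
begin

text \<open>Both I^s and its integral closure are monomial ideals, so it suffices to treat a
  monomial x^a of some f integral over I^s. Let P be a set of variables meeting every window
  {i, ..., i+t-1}, the support of the generator u_i. Grading by the P-degree, every generator has
  degree at least 1, so comparing the lowest-degree parts in the integral equation shows that every
  monomial of f, in particular x^a, has P-degree at least s. The windows form an interval
  hypergraph, for which the minimal a-weight of a hitting set equals the maximal number of windows,
  counted with multiplicity, that fit under the exponent vector a; a greedy left-to-right
  construction gives such a packing. Hence x^a is divisible by a product of s generators.\<close>

section \<open>Ideals of the polynomial ring\<close>

lemma ideal_gen_zero: "0 \<in> ideal_gen R G"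
  unfolding ideal_gen_def by (rule CollectI, rule exI[of _ 0]) auto

lemma ideal_gen_gen: "1 \<in> R \<Longrightarrow> g \<in> G \<Longrightarrow> g \<in> ideal_gen R G"
  unfolding ideal_gen_def
  by (rule CollectI, rule exI[of _ 1], rule exI[of _ "\<lambda>_. 1"], rule exI[of _ "\<lambda>_. g"]) auto

lemma ideal_gen_add:
  assumes "x \<in> ideal_gen R G" "y \<in> ideal_gen R G"
  shows "x + y \<in> ideal_gen R G"
proof -
  from assms(1) obtain k :: nat and r g where x: "x = (\<Sum>i<k. r i * g i)" "\<forall>i<k. r i \<in> R \<and> g i \<in> G"
    unfolding ideal_gen_def by blast
  from assms(2) obtain k' :: nat and r' g' where y: "y = (\<Sum>i<k'. r' i * g' i)" "\<forall>i<k'. r' i \<in> R \<and> g' i \<in> G"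
    unfolding ideal_gen_def by blast
  define r'' where "r'' i = (if i < k then r i else r' (i - k))" for i
  define g'' where "g'' i = (if i < k then g i else g' (i - k))" for i
  have "(\<Sum>i<k + k'. r'' i * g'' i) = (\<Sum>i<k. r'' i * g'' i) + (\<Sum>i=k..<k + k'. r'' i * g'' i)"
    using sum.atLeastLessThan_concat[of 0 k "k + k'" "\<lambda>i. r'' i * g'' i"] by (simp add: atLeast0LessThan)
  also have "(\<Sum>i<k. r'' i * g'' i) = x"
    using x by (simp add: r''_def g''_def)
  also have "(\<Sum>i=k..<k + k'. r'' i * g'' i) = (\<Sum>i<k'. r'' (i + k) * g'' (i + k))"
    using sum.shift_bounds_nat_ivl[of "\<lambda>i. r'' i * g'' i" 0 k k'] by (simp add: atLeast0LessThan add.commute)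
  also have "\<dots> = y"
    using y by (simp add: r''_def g''_def)
  finally have "x + y = (\<Sum>i<k + k'. r'' i * g'' i)" by simp
  moreover have "\<forall>i<k + k'. r'' i \<in> R \<and> g'' i \<in> G"
    using x y by (auto simp: r''_def g''_def)
  ultimately show ?thesis
    unfolding ideal_gen_def by blast
qed

lemma ideal_gen_mult:
  assumes "\<And>a b. a \<in> R \<Longrightarrow> b \<in> R \<Longrightarrow> a * b \<in> R" "c \<in> R" "x \<in> ideal_gen R G"
  shows "c * x \<in> ideal_gen R G"
proof -
  from assms(3) obtain k :: nat and r g where x: "x = (\<Sum>i<k. r i * g i)" "\<forall>i<k. r i \<in> R \<and> g i \<in> G"
    unfolding ideal_gen_def by blast
  have "c * x = (\<Sum>i<k. (c * r i) * g i)"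
    using x by (simp add: sum_distrib_left mult.assoc)
  moreover have "\<forall>i<k. c * r i \<in> R \<and> g i \<in> G"
    using x assms by auto
  ultimately show ?thesis
    unfolding ideal_gen_def by (intro CollectI exI[of _ k] exI[of _ "\<lambda>i. c * r i"] exI[of _ g]) simp
qed

lemma ideal_gen_subset:
  assumes "\<And>a b. a \<in> R \<Longrightarrow> b \<in> R \<Longrightarrow> a * b \<in> R" "\<And>a b. a \<in> R \<Longrightarrow> b \<in> R \<Longrightarrow> a + b \<in> R"
    and "0 \<in> R" "G \<subseteq> R"
  shows "ideal_gen R G \<subseteq> R"
proof
  fix x assume "x \<in> ideal_gen R G"
  then obtain k :: nat and r g where x: "x = (\<Sum>i<k. r i * g i)" "\<forall>i<k. r i \<in> R \<and> g i \<in> G"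
    unfolding ideal_gen_def by blast
  have "(\<Sum>i<k. r i * g i) \<in> R"
    using x(2) by (induction k) (use assms in auto)
  then show "x \<in> R"
    using x by simp
qed

lemma ideal_pow_mult_power_mem:
  assumes "1 \<in> R" "g \<in> I" "x \<in> ideal_pow R I k"
  shows "x * g ^ c \<in> ideal_pow R I (k + c)"
proof (induction c)
  case 0
  then show ?case using assms(3) by simp
next
  case (Suc c)
  then have "x * g ^ c * g \<in> ideal_pow R I (Suc (k + c))"
    unfolding ideal_pow.simps ideal_prod_def using assms(1,2) by (blast intro: ideal_gen_gen)
  then show ?case
    by (simp add: mult.assoc mult.commute[of g])
qed

lemma prod_power_mem_ideal_pow:
  assumes "finite S" "1 \<in> R" "\<And>i. i \<in> S \<Longrightarrow> g i \<in> I" "r \<in> R"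
  shows "r * (\<Prod>i\<in>S. g i ^ c i) \<in> ideal_pow R I (sum c S)"
  using assms(1,3)
proof (induction S rule: finite_induct)
  case empty
  then show ?case using assms(4) by simp
next
  case (insert i S)
  then have "r * (\<Prod>i\<in>S. g i ^ c i) * g i ^ c i \<in> ideal_pow R I (sum c S + c i)"
    by (intro ideal_pow_mult_power_mem assms(2)) auto
  then show ?case
    using insert by (simp add: ac_simps)
qed

lemma polyring_add: "a \<in> polyring n \<Longrightarrow> b \<in> polyring n \<Longrightarrow> a + b \<in> polyring n"
  unfolding polyring_def using keys_add[of a b] by blast

lemma polyring_mult:
  assumes "a \<in> polyring n" "b \<in> polyring n"
  shows "a * b \<in> polyring n"
  unfolding polyring_def
proof (intro CollectI ballI)
  fix m assume "m \<in> Poly_Mapping.keys (a * b)"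
  then obtain x y where "m = x + y" "x \<in> Poly_Mapping.keys a" "y \<in> Poly_Mapping.keys b"
    using keys_mult by blast
  then show "Poly_Mapping.keys m \<subseteq> {1..n}"
    using assms keys_add[of x y] unfolding polyring_def by blast
qed

lemma polyring_single: "Poly_Mapping.keys m \<subseteq> {1..n} \<Longrightarrow> Poly_Mapping.single m c \<in> polyring n"
  unfolding polyring_def by simp

lemma polyring_zero: "0 \<in> polyring n"
  unfolding polyring_def by simp

lemma polyring_one: "1 \<in> polyring n"
  unfolding polyring_def by simp

lemma ideal_gen_polyring: "G \<subseteq> polyring n \<Longrightarrow> ideal_gen (polyring n) G \<subseteq> polyring n"
  by (rule ideal_gen_subset) (auto intro: polyring_add polyring_mult polyring_zero)

lemma ideal_pow_polyring: "I \<subseteq> polyring n \<Longrightarrow> ideal_pow (polyring n) I s \<subseteq> polyring n"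
  by (induction s) (auto intro!: ideal_gen_polyring polyring_mult simp: ideal_prod_def)

lemma ideal_pow_polyring_mult:
  "x \<in> ideal_pow (polyring n) I s \<Longrightarrow> c \<in> polyring n \<Longrightarrow> c * x \<in> ideal_pow (polyring n) I s"
  by (cases s) (auto intro: ideal_gen_mult polyring_mult simp: ideal_prod_def)

lemma ideal_pow_polyring_add:
  "x \<in> ideal_pow (polyring n) I s \<Longrightarrow> y \<in> ideal_pow (polyring n) I s \<Longrightarrow> x + y \<in> ideal_pow (polyring n) I s"
  by (cases s) (auto intro: ideal_gen_add polyring_add simp: ideal_prod_def)

lemma ideal_pow_polyring_zero: "0 \<in> ideal_pow (polyring n) I s"
  by (cases s) (auto intro: ideal_gen_zero polyring_zero simp: ideal_prod_def)

lemma ideal_pow_polyring_sum: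
  assumes "finite S" "\<And>i. i \<in> S \<Longrightarrow> f i \<in> ideal_pow (polyring n) I s"
  shows "sum f S \<in> ideal_pow (polyring n) I s"
  using assms by (induction S rule: finite_induct) (auto intro: ideal_pow_polyring_add ideal_pow_polyring_zero)

lemma ideal_pow_polyring_if_terms_mem:
  assumes "\<And>a. a \<in> Poly_Mapping.keys f \<Longrightarrow> Poly_Mapping.single a 1 \<in> ideal_pow (polyring n) I s"
  shows "f \<in> ideal_pow (polyring n) I s"
proof -
  have "f = (\<Sum>a\<in>Poly_Mapping.keys f. Poly_Mapping.single 0 (Poly_Mapping.lookup f a) * Poly_Mapping.single a 1)"
    by (rule poly_mapping_eqI) (simp add: mult_single lookup_sum lookup_single when_def in_keys_iff)
  also have "\<dots> \<in> ideal_pow (polyring n) I s"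
    using assms by (intro ideal_pow_polyring_sum ideal_pow_polyring_mult polyring_single) auto
  finally show ?thesis .
qed

lemma subset_int_closure_polyring:
  assumes "J \<subseteq> polyring n"
  shows "J \<subseteq> int_closure (polyring n) J"
proof
  fix f assume f: "f \<in> J"
  have "1 * f \<in> ideal_pow (polyring n) J 1"
    unfolding One_nat_def ideal_pow.simps ideal_prod_def using f polyring_one
    by (blast intro: ideal_gen_gen)
  then have "- 1 * (1 * f) \<in> ideal_pow (polyring n) J 1"
    by (rule ideal_pow_polyring_mult) (simp add: polyring_def)
  then show "f \<in> int_closure (polyring n) J"
    unfolding int_closure_def using f assms
    by (intro CollectI conjI exI[of _ 1] exI[of _ "\<lambda>_. - f"]) auto
qed

section \<open>Weight gradings and integral dependence\<close>

definition weights_ge :: "((nat \<Rightarrow>\<^sub>0 nat) \<Rightarrow> nat) \<Rightarrow> nat \<Rightarrow> 'a::zero mpoly \<Rightarrow> bool" where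
  "weights_ge w d p \<longleftrightarrow> (\<forall>a\<in>Poly_Mapping.keys p. d \<le> w a)"

definition weight_homogeneous :: "((nat \<Rightarrow>\<^sub>0 nat) \<Rightarrow> nat) \<Rightarrow> nat \<Rightarrow> 'a::zero mpoly \<Rightarrow> bool" where
  "weight_homogeneous w d p \<longleftrightarrow> (\<forall>a\<in>Poly_Mapping.keys p. w a = d)"

lemma weights_ge_0 [simp]: "weights_ge w 0 p"
  unfolding weights_ge_def by simp

lemma weights_ge_mono: "weights_ge w d p \<Longrightarrow> d' \<le> d \<Longrightarrow> weights_ge w d' p"
  unfolding weights_ge_def by force

lemma weights_ge_uminus: "weights_ge w d (- p) \<longleftrightarrow> weights_ge w d p"
  unfolding weights_ge_def by simp

lemma weights_ge_sum:
  "(\<And>i. i \<in> S \<Longrightarrow> weights_ge w d (f i)) \<Longrightarrow> weights_ge w d (sum f S)"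
  unfolding weights_ge_def using keys_sum[of f S] by blast

lemma weight_homogeneous_imp_weights_ge: "weight_homogeneous w d p \<Longrightarrow> weights_ge w d p"
  unfolding weight_homogeneous_def weights_ge_def by simp

lemma lowest_weight_part:
  fixes f :: "'a::ab_group_add mpoly"
  assumes "f \<noteq> 0"
  obtains d f0 where "f0 \<noteq> 0" "weight_homogeneous w d f0" "weights_ge w d f" "weights_ge w (Suc d) (f - f0)"
proof -
  define d where "d = Min (w ` Poly_Mapping.keys f)"
  define f0 where "f0 = (\<Sum>a\<in>{a\<in>Poly_Mapping.keys f. w a = d}. Poly_Mapping.single a (Poly_Mapping.lookup f a))"
  have lookup_f0: "Poly_Mapping.lookup f0 a = (if w a = d then Poly_Mapping.lookup f a else 0)" for a
    unfolding f0_def lookup_sum by (simp add: lookup_single when_def in_keys_iff)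
  have "Poly_Mapping.keys f \<noteq> {}"
    using assms by simp
  then have "d \<in> w ` Poly_Mapping.keys f"
    unfolding d_def by (intro Min_in) auto
  then obtain a0 where "a0 \<in> Poly_Mapping.keys f" "w a0 = d"
    by blast
  then have "f0 \<noteq> 0"
    using lookup_f0[of a0] by (auto simp: in_keys_iff)
  moreover have "weight_homogeneous w d f0"
    unfolding weight_homogeneous_def using lookup_f0 by (metis in_keys_iff)
  moreover have ge: "weights_ge w d f"
    unfolding weights_ge_def d_def by simp
  moreover have "weights_ge w (Suc d) (f - f0)"
    unfolding weights_ge_def
  proof
    fix a assume "a \<in> Poly_Mapping.keys (f - f0)"
    then have "a \<in> Poly_Mapping.keys f" "w a \<noteq> d"
      using lookup_f0[of a] by (auto simp: in_keys_iff lookup_minus split: if_splits)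
    then show "Suc d \<le> w a"
      using ge unfolding weights_ge_def by fastforce
  qed
  ultimately show ?thesis
    using that by blast
qed

context
  fixes w :: "(nat \<Rightarrow>\<^sub>0 nat) \<Rightarrow> nat"
  assumes w_add: "\<And>a b. w (a + b) = w a + w b"
begin

lemma weight_zero: "w 0 = 0"
  using w_add[of 0 0] by simp

lemma weights_ge_mult:
  assumes "weights_ge w d p" "weights_ge w e q"
  shows "weights_ge w (d + e) (p * q)"
  unfolding weights_ge_def
proof
  fix m assume "m \<in> Poly_Mapping.keys (p * q)"
  then obtain a b where "m = a + b" "a \<in> Poly_Mapping.keys p" "b \<in> Poly_Mapping.keys q"
    using keys_mult by blast
  then show "d + e \<le> w m"
    using assms unfolding weights_ge_def by (simp add: w_add add_mono)
qed

lemma weights_ge_power: "weights_ge w d p \<Longrightarrow> weights_ge w (k * d) (p ^ k)"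
  by (induction k) (auto dest: weights_ge_mult)

lemma weight_homogeneous_mult:
  assumes "weight_homogeneous w d p" "weight_homogeneous w e q"
  shows "weight_homogeneous w (d + e) (p * q)"
  unfolding weight_homogeneous_def
proof
  fix m assume "m \<in> Poly_Mapping.keys (p * q)"
  then obtain a b where "m = a + b" "a \<in> Poly_Mapping.keys p" "b \<in> Poly_Mapping.keys q"
    using keys_mult by blast
  then show "w m = d + e"
    using assms unfolding weight_homogeneous_def by (simp add: w_add)
qed

lemma weight_homogeneous_power:
  assumes "weight_homogeneous w d p"
  shows "weight_homogeneous w (k * d) (p ^ k)"
proof (induction k)
  case 0
  then show ?case by (simp add: weight_homogeneous_def weight_zero)
next
  case (Suc k)
  then show ?case using weight_homogeneous_mult[OF assms Suc.IH] by simp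
qed

lemma ideal_gen_weights_ge:
  assumes "\<And>g. g \<in> G \<Longrightarrow> weights_ge w e g" "x \<in> ideal_gen R G"
  shows "weights_ge w e x"
proof -
  from assms(2) obtain k :: nat and r g where x: "x = (\<Sum>i<k. r i * g i)" "\<forall>i<k. g i \<in> G"
    unfolding ideal_gen_def by blast
  have "weights_ge w (0 + e) (r i * g i)" if "i < k" for i
    using that x(2) assms(1) by (intro weights_ge_mult) auto
  then show ?thesis
    unfolding x(1) by (auto intro: weights_ge_sum)
qed

lemma ideal_pow_weights_ge:
  assumes "\<And>g. g \<in> I \<Longrightarrow> weights_ge w e g"
  shows "x \<in> ideal_pow R I k \<Longrightarrow> weights_ge w (k * e) x"
proof (induction k arbitrary: x)
  case 0
  then show ?case by simp
next
  case (Suc k)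
  have "weights_ge w (Suc k * e) g" if "g \<in> {a * b |a b. a \<in> ideal_pow R I k \<and> b \<in> I}" for g
  proof -
    from that obtain a b where "g = a * b" "a \<in> ideal_pow R I k" "b \<in> I"
      by blast
    then show ?thesis
      using weights_ge_mult[OF Suc.IH assms] by (simp add: add.commute)
  qed
  then show ?case
    using Suc.prems unfolding ideal_pow.simps ideal_prod_def by (rule ideal_gen_weights_ge)
qed

lemma weights_ge_power_diff:
  fixes f f0 :: "'a::comm_ring_1 mpoly"
  assumes "weights_ge w d f" "weights_ge w d f0" "weights_ge w (Suc d) (f - f0)" "1 \<le> m"
  shows "weights_ge w (Suc (m * d)) (f ^ m - f0 ^ m)"
proof -
  have "weights_ge w ((m - Suc i) * d + i * d) (f0 ^ (m - Suc i) * f ^ i)" for i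
    using assms(1,2) by (intro weights_ge_mult weights_ge_power)
  moreover have "(m - Suc i) * d + i * d = (m - 1) * d" if "i < m" for i
    using that by (simp flip: add_mult_distrib)
  ultimately have "weights_ge w ((m - 1) * d) (f0 ^ (m - Suc i) * f ^ i)" if "i < m" for i
    using that by metis
  then have "weights_ge w (Suc d + (m - 1) * d) ((f - f0) * (\<Sum>i<m. f0 ^ (m - Suc i) * f ^ i))"
    using assms(3) by (intro weights_ge_mult weights_ge_sum) auto
  moreover have "Suc d + (m - 1) * d = Suc (m * d)"
    using assms(4) by (cases m) simp_all
  ultimately show ?thesis
    by (simp add: power_diff_sumr2)
qed

lemma integral_equation_weights_ge:
  fixes f :: "'a::idom mpoly"
  assumes m: "1 \<le> m"
    and eq: "f ^ m + (\<Sum>i=1..m. A i * f ^ (m - i)) = 0"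
    and A: "\<And>i. i \<in> {1..m} \<Longrightarrow> weights_ge w (i * E) (A i)"
  shows "weights_ge w E f"
proof (rule ccontr)
  assume "\<not> weights_ge w E f"
  then obtain b where b: "b \<in> Poly_Mapping.keys f" "w b < E"
    unfolding weights_ge_def by auto
  then have "f \<noteq> 0"
    by auto
  then obtain d f0 where f0: "f0 \<noteq> 0" "weight_homogeneous w d f0" "weights_ge w d f"
      "weights_ge w (Suc d) (f - f0)"
    by (rule lowest_weight_part)
  have "d < E"
    using b f0(3) unfolding weights_ge_def by fastforce
  from f0(1) obtain c where c: "c \<in> Poly_Mapping.keys (f0 ^ m)"
    by (metis power_not_zero keys_eq_empty ex_in_conv)
  have wc: "w c = m * d"
    using c weight_homogeneous_power[OF f0(2)] unfolding weight_homogeneous_def by blast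
  have "weights_ge w (Suc (m * d)) (f ^ m - f0 ^ m)"
    by (intro weights_ge_power_diff f0(3,4) weight_homogeneous_imp_weights_ge[OF f0(2)] m)
  then have "c \<notin> Poly_Mapping.keys (f ^ m - f0 ^ m)"
    using wc unfolding weights_ge_def by fastforce
  then have "c \<in> Poly_Mapping.keys (f ^ m)"
    using c by (simp add: in_keys_iff lookup_minus)
  moreover have "weights_ge w (Suc (m * d)) (f ^ m)"
  proof -
    have "weights_ge w (Suc (m * d)) (A i * f ^ (m - i))" if i: "i \<in> {1..m}" for i
    proof (rule weights_ge_mono)
      show "weights_ge w (i * E + (m - i) * d) (A i * f ^ (m - i))"
        using A[OF i] f0(3) by (intro weights_ge_mult weights_ge_power)
      obtain j where "m = i + j"
        using i by (metis atLeastAtMost_iff le_Suc_ex)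
      then show "Suc (m * d) \<le> i * E + (m - i) * d"
        using i \<open>d < E\<close> mult_le_mono2[of "Suc d" E i] by (simp add: algebra_simps)
    qed
    then have "weights_ge w (Suc (m * d)) (- (\<Sum>i=1..m. A i * f ^ (m - i)))"
      unfolding weights_ge_uminus by (rule weights_ge_sum)
    moreover have "f ^ m = - (\<Sum>i=1..m. A i * f ^ (m - i))"
      using eq by (simp add: eq_neg_iff_add_eq_0)
    ultimately show ?thesis
      by simp
  qed
  ultimately show False
    using wc unfolding weights_ge_def by fastforce
qed

end

section \<open>Packing windows of consecutive integers\<close>

lemma sum_telescope_mono_nat:
  fixes C :: "nat \<Rightarrow> nat"
  assumes "mono C"
  shows "(\<Sum>i\<in>{l<..u}. C i - C (i - 1)) = C u - C l"
proof (induction u)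
  case 0
  then show ?case
    using monoD[OF assms, of 0 l] by simp
next
  case (Suc u)
  show ?case
  proof (cases "l \<le> u")
    case True
    then have "{l<..Suc u} = insert (Suc u) {l<..u}"
      by auto
    moreover have "C l \<le> C u" "C u \<le> C (Suc u)"
      using True by (simp_all add: monoD[OF assms])
    ultimately show ?thesis
      using Suc.IH by simp
  next
    case False
    then show ?thesis
      using monoD[OF assms, of "Suc u" l] by simp
  qed
qed

definition hits_windows_upto :: "nat \<Rightarrow> nat \<Rightarrow> nat \<Rightarrow> nat set \<Rightarrow> bool" where
  "hits_windows_upto n t j P \<longleftrightarrow>
     (\<forall>i\<in>{1..n - t + 1}. i + t - 1 \<le> j \<longrightarrow> (\<exists>p\<in>P. i \<le> p \<and> p \<le> i + t - 1))"

definition min_hitting_weight :: "nat \<Rightarrow> nat \<Rightarrow> (nat \<Rightarrow> nat) \<Rightarrow> nat \<Rightarrow> nat" where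
  "min_hitting_weight n t a j = (LEAST v. \<exists>P\<subseteq>{1..n}. hits_windows_upto n t j P \<and> v = sum a P)"

context
  fixes n t :: nat and a :: "nat \<Rightarrow> nat"
  assumes t: "1 \<le> t" "t \<le> n"
begin

lemma min_hitting_weight_le:
  "P \<subseteq> {1..n} \<Longrightarrow> hits_windows_upto n t j P \<Longrightarrow> min_hitting_weight n t a j \<le> sum a P"
  unfolding min_hitting_weight_def by (rule Least_le) blast

lemma min_hitting_weight_attained:
  obtains P where "P \<subseteq> {1..n}" "hits_windows_upto n t j P" "min_hitting_weight n t a j = sum a P"
proof -
  have "hits_windows_upto n t j {1..n}"
    unfolding hits_windows_upto_def
  proof (intro ballI impI)
    fix i assume "i \<in> {1..n - t + 1}"
    then show "\<exists>p\<in>{1..n}. i \<le> p \<and> p \<le> i + t - 1"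
      using t by (intro bexI[of _ i]) auto
  qed
  then have "\<exists>v. \<exists>P\<subseteq>{1..n}. hits_windows_upto n t j P \<and> v = sum a P"
    by blast
  then have "\<exists>P\<subseteq>{1..n}. hits_windows_upto n t j P \<and> min_hitting_weight n t a j = sum a P"
    unfolding min_hitting_weight_def by (rule LeastI_ex)
  then show ?thesis
    using that by blast
qed

lemma min_hitting_weight_mono: "mono (min_hitting_weight n t a)"
proof
  fix j j' :: nat assume "j \<le> j'"
  obtain P where P: "P \<subseteq> {1..n}" "hits_windows_upto n t j' P" "min_hitting_weight n t a j' = sum a P"
    by (rule min_hitting_weight_attained)
  have "hits_windows_upto n t j P"
    using P(2) \<open>j \<le> j'\<close> unfolding hits_windows_upto_def by auto
  then show "min_hitting_weight n t a j \<le> min_hitting_weight n t a j'"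
    using P min_hitting_weight_le by simp
qed

lemma min_hitting_weight_short:
  assumes "j < t"
  shows "min_hitting_weight n t a j = 0"
proof -
  have "hits_windows_upto n t j {}"
    using assms unfolding hits_windows_upto_def by auto
  then show ?thesis
    using min_hitting_weight_le[of "{}" j] by simp
qed

text \<open>An optimal hitting set for the windows inside [1, j - 1], together with j, hits every
  window inside [1, j + t - 1].\<close>
lemma min_hitting_weight_step:
  assumes "1 \<le> j" "j \<le> n"
  shows "min_hitting_weight n t a (j + t - 1) \<le> min_hitting_weight n t a (j - 1) + a j"
proof -
  obtain P where P: "P \<subseteq> {1..n}" "hits_windows_upto n t (j - 1) P"
      "min_hitting_weight n t a (j - 1) = sum a P"
    by (rule min_hitting_weight_attained)
  have "hits_windows_upto n t (j + t - 1) (insert j P)"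
    unfolding hits_windows_upto_def
  proof (intro ballI impI)
    fix i assume i: "i \<in> {1..n - t + 1}" "i + t - 1 \<le> j + t - 1"
    show "\<exists>p\<in>insert j P. i \<le> p \<and> p \<le> i + t - 1"
    proof (cases "i + t - 1 \<le> j - 1")
      case True
      then show ?thesis
        using P(2) i(1) unfolding hits_windows_upto_def by blast
    next
      case False
      then show ?thesis
        using i t by (intro bexI[of _ j]) auto
    qed
  qed
  then have "min_hitting_weight n t a (j + t - 1) \<le> sum a (insert j P)"
    using P(1) assms by (intro min_hitting_weight_le) auto
  also have "\<dots> \<le> a j + sum a P"
    using finite_subset[OF P(1)] by (simp add: sum.insert_if)
  finally show ?thesis
    using P(3) by simp
qed

text \<open>The greedy packing: window i receives the increase of the capped optimal hitting
  weight C i = min (min_hitting_weight (i + t - 1)) s.\<close>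
lemma window_packing:
  assumes hyp: "\<And>P. P \<subseteq> {1..n} \<Longrightarrow> hits_windows_upto n t n P \<Longrightarrow> s \<le> sum a P"
  obtains c where "sum c {1..n - t + 1} = s"
    "\<And>j. sum c {i\<in>{1..n - t + 1}. i \<le> j \<and> j \<le> i + t - 1} \<le> a j"
proof -
  let ?H = "min_hitting_weight n t a"
  define C where "C i = min (?H (i + t - 1)) s" for i
  define c where "c i = C i - C (i - 1)" for i
  have C_mono: "mono C"
    unfolding C_def by (intro monoI min.mono monoD[OF min_hitting_weight_mono]) auto
  have "C 0 = 0"
    unfolding C_def using t by (simp add: min_hitting_weight_short)
  moreover have "C (n - t + 1) = s"
  proof -
    obtain P where "P \<subseteq> {1..n}" "hits_windows_upto n t n P" "?H n = sum a P"
      by (rule min_hitting_weight_attained)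
    then show ?thesis
      unfolding C_def using hyp t by simp
  qed
  moreover have "{1..n - t + 1} = {0<..n - t + 1}"
    by auto
  ultimately have "sum c {1..n - t + 1} = s"
    using sum_telescope_mono_nat[OF C_mono, of 0 "n - t + 1"] unfolding c_def by simp
  moreover have "sum c {i\<in>{1..n - t + 1}. i \<le> j \<and> j \<le> i + t - 1} \<le> a j" for j
  proof (cases "1 \<le> j \<and> j \<le> n")
    case True
    have "{i\<in>{1..n - t + 1}. i \<le> j \<and> j \<le> i + t - 1} = {j - t<..min j (n - t + 1)}"
      using t by auto
    then have "sum c {i\<in>{1..n - t + 1}. i \<le> j \<and> j \<le> i + t - 1} = C (min j (n - t + 1)) - C (j - t)"
      unfolding c_def using sum_telescope_mono_nat[OF C_mono] by simp
    also have "\<dots> \<le> C j - C (j - t)"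
      using monoD[OF C_mono, of "min j (n - t + 1)" j] by simp
    also have "\<dots> \<le> a j"
    proof -
      have "?H (j - 1) \<le> ?H (j - t + t - 1)"
        by (intro monoD[OF min_hitting_weight_mono]) simp
      then have "?H (j + t - 1) \<le> ?H (j - t + t - 1) + a j"
        using min_hitting_weight_step[of j] True by simp
      then show ?thesis
        unfolding C_def by linarith
    qed
    finally show ?thesis .
  next
    case False
    then have no_window: "{i\<in>{1..n - t + 1}. i \<le> j \<and> j \<le> i + t - 1} = {}"
      using t by auto
    show ?thesis
      unfolding no_window by simp
  qed
  ultimately show ?thesis
    using that by blast
qed

end

section \<open>Monomials in powers of the path ideal\<close>

lemma power_single_one:
  "Poly_Mapping.single a (1::'a::comm_semiring_1) ^ k = Poly_Mapping.single (\<Sum>_<k. a) 1"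
  by (induction k) (simp_all add: mult_single add.commute)

lemma prod_power_single_one:
  "(\<Prod>i\<in>S. Poly_Mapping.single (g i) (1::'a::comm_semiring_1) ^ c i) =
     Poly_Mapping.single (\<Sum>i\<in>S. \<Sum>_<c i. g i) 1"
  by (induction S rule: infinite_finite_induct) (simp_all add: power_single_one mult_single)

lemma prod_Var: "(\<Prod>j\<in>S. Var j :: 'a::comm_ring_1 mpoly) = Poly_Mapping.single (\<Sum>j\<in>S. Poly_Mapping.single j 1) 1"
  by (induction S rule: infinite_finite_induct) (simp_all add: Var_def mult_single)

definition path_exp :: "nat \<Rightarrow> nat \<Rightarrow> (nat \<Rightarrow>\<^sub>0 nat)" where
  "path_exp t i = (\<Sum>j\<in>{i..i + t - 1}. Poly_Mapping.single j 1)"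

lemma lookup_path_exp: "Poly_Mapping.lookup (path_exp t i) j = (if i \<le> j \<and> j \<le> i + t - 1 then 1 else 0)"
  unfolding path_exp_def lookup_sum by (simp add: lookup_single when_def)

lemma path_gens_eq:
  "path_gens n t = {Poly_Mapping.single (path_exp t i) 1 | i. 1 \<le> i \<and> i \<le> n - t + 1}"
  unfolding path_gens_def path_exp_def prod_Var ..

lemma single_path_exp_mem_path_ideal:
  "1 \<le> i \<Longrightarrow> i \<le> n - t + 1 \<Longrightarrow> Poly_Mapping.single (path_exp t i) 1 \<in> path_ideal n t"
  unfolding path_ideal_def path_gens_eq by (blast intro: ideal_gen_gen polyring_one)

lemma path_ideal_polyring:
  assumes "t \<le> n"
  shows "path_ideal n t \<subseteq> polyring n"
  unfolding path_ideal_def path_gens_eq using assms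
  by (intro ideal_gen_polyring) (auto intro!: polyring_single simp: in_keys_iff lookup_path_exp split: if_splits)

lemma path_ideal_weights_ge:
  assumes "t \<le> n" "P \<subseteq> {1..n}" "hits_windows_upto n t n P" "g \<in> path_ideal n t"
  shows "weights_ge (\<lambda>b. \<Sum>j\<in>P. Poly_Mapping.lookup b j) 1 g"
  using assms(4) unfolding path_ideal_def
proof (rule ideal_gen_weights_ge[rotated 2])
  show "(\<Sum>j\<in>P. Poly_Mapping.lookup (a + b) j) = (\<Sum>j\<in>P. Poly_Mapping.lookup a j) + (\<Sum>j\<in>P. Poly_Mapping.lookup b j)"
    for a b :: "nat \<Rightarrow>\<^sub>0 nat"
    by (simp add: lookup_add sum.distrib)
  fix h assume "h \<in> path_gens n t"
  then obtain i where i: "1 \<le> i" "i \<le> n - t + 1" "h = Poly_Mapping.single (path_exp t i) 1"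
    unfolding path_gens_eq by blast
  have "i \<in> {1..n - t + 1}" "i + t - 1 \<le> n"
    using i(1,2) assms(1) by auto
  then obtain p where p: "p \<in> P" "i \<le> p" "p \<le> i + t - 1"
    using assms(3) unfolding hits_windows_upto_def by blast
  have "Poly_Mapping.lookup (path_exp t i) p \<le> (\<Sum>j\<in>P. Poly_Mapping.lookup (path_exp t i) j)"
    using p(1) finite_subset[OF assms(2)] by (intro member_le_sum) auto
  then show "weights_ge (\<lambda>b. \<Sum>j\<in>P. Poly_Mapping.lookup b j) 1 h"
    using i(3) p unfolding weights_ge_def by (simp add: lookup_path_exp)
qed

lemma int_closure_path_ideal_pow_weights_ge:
  fixes f :: "'a::idom mpoly"
  assumes "t \<le> n" "P \<subseteq> {1..n}" "hits_windows_upto n t n P"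
    and "f \<in> int_closure (polyring n) (ideal_pow (polyring n) (path_ideal n t) s)"
  shows "weights_ge (\<lambda>b. \<Sum>j\<in>P. Poly_Mapping.lookup b j) s f"
proof -
  let ?w = "\<lambda>b. \<Sum>j\<in>P. Poly_Mapping.lookup b j"
  let ?J = "ideal_pow (polyring n) (path_ideal n t) s"
  obtain m A where m: "1 \<le> m" and A: "\<forall>i\<in>{1..m}. A i \<in> ideal_pow (polyring n) ?J i"
    and eq: "f ^ m + (\<Sum>i=1..m. A i * f ^ (m - i)) = 0"
    using assms(4) unfolding int_closure_def by blast
  have w_add: "?w (b + b') = ?w b + ?w b'" for b b'
    by (simp add: lookup_add sum.distrib)
  have "weights_ge ?w 1 g" if "g \<in> path_ideal n t" for g
    using path_ideal_weights_ge[OF assms(1-3) that] .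
  then have "weights_ge ?w (s * 1) g" if "g \<in> ?J" for g
    using ideal_pow_weights_ge[OF w_add _ that] by blast
  then have "weights_ge ?w (i * s) (A i)" if "i \<in> {1..m}" for i
    using ideal_pow_weights_ge[OF w_add] A that by (metis mult_1_right)
  then show ?thesis
    by (rule integral_equation_weights_ge[OF w_add m eq])
qed

lemma monomial_mem_path_ideal_pow:
  assumes t: "1 \<le> t" "t \<le> n"
    and keys: "Poly_Mapping.keys a \<subseteq> {1..n}"
    and hitting: "\<And>P. P \<subseteq> {1..n} \<Longrightarrow> hits_windows_upto n t n P \<Longrightarrow> s \<le> sum (Poly_Mapping.lookup a) P"
  shows "Poly_Mapping.single a 1 \<in> ideal_pow (polyring n) (path_ideal n t) s"
proof -
  let ?N = "n - t + 1"
  obtain c where c: "sum c {1..?N} = s"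
    "\<And>j. sum c {i\<in>{1..?N}. i \<le> j \<and> j \<le> i + t - 1} \<le> Poly_Mapping.lookup a j"
    using window_packing[OF t hitting] by blast
  define e where "e = (\<Sum>i\<in>{1..?N}. \<Sum>_<c i. path_exp t i)"
  have "Poly_Mapping.lookup e j = sum c {i\<in>{1..?N}. i \<le> j \<and> j \<le> i + t - 1}" for j
  proof -
    have "Poly_Mapping.lookup e j = (\<Sum>i\<in>{1..?N}. if i \<le> j \<and> j \<le> i + t - 1 then c i else 0)"
      unfolding e_def lookup_sum by (intro sum.cong) (auto simp: lookup_path_exp)
    also have "\<dots> = sum c {i\<in>{1..?N}. i \<le> j \<and> j \<le> i + t - 1}"
      by (rule sum.inter_filter[symmetric]) simp
    finally show ?thesis .
  qed
  then have a_eq: "a = (a - e) + e"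
    using c(2) by (intro poly_mapping_eqI) (simp add: lookup_add lookup_minus)
  have "Poly_Mapping.single a (1::'a) =
      Poly_Mapping.single (a - e) 1 * (\<Prod>i\<in>{1..?N}. Poly_Mapping.single (path_exp t i) 1 ^ c i)"
    by (subst a_eq) (simp add: prod_power_single_one mult_single e_def)
  also have "\<dots> \<in> ideal_pow (polyring n) (path_ideal n t) s"
  proof -
    have "Poly_Mapping.keys (a - e) \<subseteq> {1..n}"
      using keys by (auto simp: in_keys_iff lookup_minus)
    then show ?thesis
      unfolding c(1)[symmetric]
      by (intro prod_power_mem_ideal_pow polyring_one polyring_single single_path_exp_mem_path_ideal) auto
  qed
  finally show ?thesis .
qed

theorem corollary2p4:
  fixes n t s :: nat
  assumes "1 \<le> t" and "t \<le> n" and "1 \<le> s"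
  shows "int_closure (polyring n) (ideal_pow (polyring n) (path_ideal n t :: 'k::field mpoly set) s)
         = ideal_pow (polyring n) (path_ideal n t) s"
proof
  let ?J = "ideal_pow (polyring n) (path_ideal n t) s :: 'k mpoly set"
  show "int_closure (polyring n) ?J \<subseteq> ?J"
  proof
    fix f assume f: "f \<in> int_closure (polyring n) ?J"
    show "f \<in> ?J"
    proof (rule ideal_pow_polyring_if_terms_mem)
      fix a assume a: "a \<in> Poly_Mapping.keys f"
      have "Poly_Mapping.keys a \<subseteq> {1..n}"
        using f a unfolding int_closure_def polyring_def by blast
      then show "Poly_Mapping.single a 1 \<in> ?J"
        using int_closure_path_ideal_pow_weights_ge[OF assms(2) _ _ f] a
        by (intro monomial_mem_path_ideal_pow[OF assms(1,2)]) (auto simp: weights_ge_def)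
    qed
  qed
  show "?J \<subseteq> int_closure (polyring n) ?J"
    using assms(2) by (intro subset_int_closure_polyring ideal_pow_polyring path_ideal_polyring)
qed

end
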